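(* For every $k \geq 2$ and every $m$ with $k \le m \le 2k-2$, the number of Grassmannian permutations of $[m]$ that avoid $\operatorname{id}_k = 12\cdots k$ equals \[ \sum_{j=1}^{2k-m} (-1)^{j-1}\, j \binom{2k-m-j}{j} C_{k-j}, \] where $C_n = \frac{1}{n+1}\binom{2n}{n}$ is the $n$-th Catalan number (and $\binom{a}{b}=0$ when $b>a\ge 0$).
   Context: A permutation of $[m]$ is Grassmannian if it has at most one descent (one-line notation). A permutation $\sigma$ contains a pattern $\pi$ of size $k$ if some subsequence of $\sigma$ of length $k$ is order-isomorphic to $\pi$; otherwise $\sigma$ avoids $\pi$. *)

theory Defs
  imports Main "HOL-Library.Sublist" "HOL-Combinatorics.Multiset_Permutations"
begin

text \<open>Permutations of [m] in one-line notation are lists in permutations_of_set {1..m}.\<close>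

definition descents :: "nat list \<Rightarrow> nat set" where
  "descents xs = {i. Suc i < length xs \<and> xs ! i > xs ! Suc i}"

definition grassmannian :: "nat list \<Rightarrow> bool" where
  "grassmannian xs \<longleftrightarrow> card (descents xs) \<le> 1"

definition order_iso :: "nat list \<Rightarrow> nat list \<Rightarrow> bool" where
  "order_iso xs ys \<longleftrightarrow> length xs = length ys \<and>
     (\<forall>i < length xs. \<forall>j < length xs. xs ! i < xs ! j \<longleftrightarrow> ys ! i < ys ! j)"

definition contains_pattern :: "nat list \<Rightarrow> nat list \<Rightarrow> bool" where
  "contains_pattern \<sigma> \<pi> \<longleftrightarrow> (\<exists>\<tau>. subseq \<tau> \<sigma> \<and> order_iso \<tau> \<pi>)"

definition avoids :: "nat list \<Rightarrow> nat list \<Rightarrow> bool" where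
  "avoids \<sigma> \<pi> \<longleftrightarrow> \<not> contains_pattern \<sigma> \<pi>"

definition id_perm :: "nat \<Rightarrow> nat list" where
  "id_perm k = [1..<k+1]"

definition catalan :: "nat \<Rightarrow> nat" where
  "catalan n = ((2*n) choose n) div (n+1)"

end

theory Submission
  imports Defs
begin

text \<open>
A Grassmannian permutation of \<open>[m]\<close> is the increasing list of a set \<open>S \<subseteq> [m]\<close> followed by the
increasing list of its complement. An increasing subsequence of it uses the elements of \<open>S\<close>
below some threshold \<open>t\<close> and the elements of the complement from \<open>t\<close> on, so the permutation
avoids \<open>12\<cdots>k\<close> iff all these cut lengths are at most \<open>k - 1\<close>; for \<open>k \<le> m\<close> this forces a genuine
descent, so \<open>S\<close> is determined by the permutation.

Whether or not \<open>m \<in> S\<close> gives a Pascal-type recursion for the number of such sets of size \<open>a\<close>,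
solved by \<open>C(m,a) - C(m,k)\<close> inside the range of admissible sizes; summing over \<open>a\<close> gives a window
of binomial coefficients. On the other side, \<open>C(n-j,j)\<close> satisfies a Fibonacci-type recursion in
\<open>n = 2k - m\<close>, and Pascal's rule shows that the alternating Catalan sum and the window obey the
same two-step recursion with the same initial values.
\<close>

section \<open>Ballot numbers and alternating Catalan sums\<close>

definition ballot :: "nat \<Rightarrow> nat \<Rightarrow> int" where
  "ballot M k = int (M choose k) - int (M choose Suc k)"

lemma ballot_Suc_Suc: "ballot (Suc M) (Suc k) = ballot M k + ballot M (Suc k)"
  by (simp add: ballot_def)

lemma catalan_eq_ballot: "int (catalan k) = ballot (2*k) k"
proof -
  define x where "x = (2*k) choose k"
  define y where "y = (2*k) choose Suc k"
  have "Suc k * y = 2*k * ((2*k - 1) choose k)"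
    unfolding y_def by (rule binomial_absorption)
  moreover have "k * x = 2*k * ((2*k - 1) choose k)"
    using binomial_absorb_comp[of "2*k" k] unfolding x_def by simp
  ultimately have xy: "Suc k * y = k * x" by metis
  then have "Suc k * y \<le> Suc k * x" by simp
  then have "y \<le> x" by (simp only: Suc_mult_le_cancel1)
  with xy have "x = Suc k * (x - y)" by (simp add: algebra_simps diff_mult_distrib2)
  then have "x div Suc k = x - y" by (metis nonzero_mult_div_cancel_left Zero_not_Suc)
  with \<open>y \<le> x\<close> show ?thesis by (simp add: catalan_def ballot_def x_def[symmetric] y_def[symmetric])
qed

lemma catalan_eq_ballot_pred: "1 \<le> k \<Longrightarrow> int (catalan k) = ballot (2*k - 1) k"
proof -
  assume "1 \<le> k"
  then obtain j where k: "k = Suc j" by (cases k) auto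
  have "ballot (Suc (2*j)) j = 0"
    using binomial_symmetric[of j "Suc (2*j)"] by (simp add: ballot_def Suc_diff_le)
  then show ?thesis
    unfolding catalan_eq_ballot k by (simp add: ballot_Suc_Suc[of "Suc (2*j)" j, simplified])
qed

definition diagonal_binomial_sum :: "(nat \<Rightarrow> int) \<Rightarrow> nat \<Rightarrow> int" where
  "diagonal_binomial_sum f n = (\<Sum>j\<le>n. f j * int ((n - j) choose j))"

lemma diagonal_binomial_sum_0 [simp]: "diagonal_binomial_sum f 0 = f 0"
  by (simp add: diagonal_binomial_sum_def)

lemma diagonal_binomial_sum_1 [simp]: "diagonal_binomial_sum f (Suc 0) = f 0"
  by (simp add: diagonal_binomial_sum_def)

lemma diagonal_binomial_sum_Suc_Suc:
  "diagonal_binomial_sum f (Suc (Suc n))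
     = diagonal_binomial_sum f (Suc n) + diagonal_binomial_sum (\<lambda>i. f (Suc i)) n"
proof -
  have shift: "diagonal_binomial_sum f (Suc n) = f 0 + (\<Sum>i\<le>n. f (Suc i) * int ((n - i) choose Suc i))" for n
    unfolding diagonal_binomial_sum_def by (simp add: sum.atMost_Suc_shift del: sum.atMost_Suc)
  have "(\<Sum>i\<le>Suc n. f (Suc i) * int ((Suc n - i) choose Suc i))
      = (\<Sum>i\<le>n. f (Suc i) * int ((n - i) choose Suc i)) + (\<Sum>i\<le>n. f (Suc i) * int ((n - i) choose i))"
    by (simp add: sum.distrib[symmetric] Suc_diff_le algebra_simps)
  then show ?thesis
    unfolding shift by (simp add: diagonal_binomial_sum_def)
qed

definition signed_catalan :: "nat \<Rightarrow> nat \<Rightarrow> int" where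
  "signed_catalan k j = (-1)^j * int (catalan (k - j))"

lemma signed_catalan_Suc: "signed_catalan k (Suc j) = - signed_catalan (k - 1) j"
  by (simp add: signed_catalan_def)

definition alt_catalan_sum :: "nat \<Rightarrow> nat \<Rightarrow> int" where
  "alt_catalan_sum k = diagonal_binomial_sum (signed_catalan k)"

definition weighted_alt_catalan_sum :: "nat \<Rightarrow> nat \<Rightarrow> int" where
  "weighted_alt_catalan_sum k = diagonal_binomial_sum (\<lambda>j. - int j * signed_catalan k j)"

lemma alt_catalan_sum_Suc_Suc:
  "alt_catalan_sum k (Suc (Suc n)) = alt_catalan_sum k (Suc n) - alt_catalan_sum (k - 1) n"
  unfolding alt_catalan_sum_def diagonal_binomial_sum_Suc_Suc signed_catalan_Suc
  by (simp add: diagonal_binomial_sum_def sum_negf)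

lemma weighted_alt_catalan_sum_Suc_Suc:
  "weighted_alt_catalan_sum k (Suc (Suc n))
     = weighted_alt_catalan_sum k (Suc n) - weighted_alt_catalan_sum (k - 1) n + alt_catalan_sum (k - 1) n"
  unfolding weighted_alt_catalan_sum_def alt_catalan_sum_def diagonal_binomial_sum_Suc_Suc signed_catalan_Suc
  by (simp add: diagonal_binomial_sum_def sum_subtractf[symmetric] sum.distrib[symmetric] algebra_simps)

lemma alt_catalan_sum_eq_ballot: "n \<le> k \<Longrightarrow> alt_catalan_sum k n = ballot (2*k - n) k"
proof (induction n arbitrary: k rule: induct_nat_012)
  case 0
  then show ?case by (simp add: alt_catalan_sum_def signed_catalan_def catalan_eq_ballot)
next
  case 1
  then show ?case by (simp add: alt_catalan_sum_def signed_catalan_def catalan_eq_ballot_pred)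
next
  case (ge2 n)
  then obtain K where k: "k = Suc K" by (cases k) auto
  define M where "M = 2*K - n"
  have M: "2*k - Suc (Suc n) = M" "2*k - Suc n = Suc M" "2*K - n = M"
    using ge2.prems unfolding k M_def by simp_all
  have "alt_catalan_sum k (Suc n) = ballot (Suc M) (Suc K)"
    using ge2.IH(2)[of k] ge2.prems M(2) k by simp
  moreover have "alt_catalan_sum K n = ballot M K"
    using ge2.IH(1)[of K] ge2.prems M(3) k by simp
  ultimately have "alt_catalan_sum k (Suc (Suc n)) = ballot (Suc M) (Suc K) - ballot M K"
    unfolding alt_catalan_sum_Suc_Suc k by simp
  also have "\<dots> = ballot M (Suc K)"
    by (simp add: ballot_Suc_Suc)
  finally show ?case using M(1) k by simp
qed

definition binomial_prefix_sum :: "nat \<Rightarrow> nat \<Rightarrow> int" where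
  "binomial_prefix_sum M r = (\<Sum>a<r. int (M choose a))"

lemma binomial_prefix_sum_Suc: "binomial_prefix_sum M (Suc r) = binomial_prefix_sum M r + int (M choose r)"
  by (simp add: binomial_prefix_sum_def)

lemma binomial_prefix_sum_Suc_Suc:
  "binomial_prefix_sum (Suc M) (Suc r) = binomial_prefix_sum M (Suc r) + binomial_prefix_sum M r"
  by (induction r) (simp_all add: binomial_prefix_sum_Suc binomial_prefix_sum_def)

text \<open>\<open>\<Sum>a = k-n+1..k-1. C(M,a) - C(M,k)\<close> with \<open>M = 2k - n\<close>, written with prefix sums so that
  Pascal's rule applies.\<close>

definition ballot_window_sum :: "nat \<Rightarrow> nat \<Rightarrow> int" where
  "ballot_window_sum k n = binomial_prefix_sum (2*k - n) k - binomial_prefix_sum (2*k - n) (k - n + 1)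
     - int (n - 1) * int ((2*k - n) choose k)"

lemma ballot_window_sum_Suc_Suc:
  assumes "Suc (Suc (Suc n)) \<le> k"
  shows "ballot_window_sum k (Suc (Suc (Suc n)))
    = ballot_window_sum k (Suc (Suc n)) - ballot_window_sum (k - 1) (Suc n) + ballot (2*(k - 1) - Suc n) (k - 1)"
proof -
  obtain K where k: "k = Suc K" using assms by (cases k) auto
  then have K: "k - 1 = K" by simp
  define M where "M = 2*k - Suc (Suc (Suc n))"
  define R where "R = K - Suc n"
  have idx: "2*k - Suc (Suc n) = Suc M" "k - Suc (Suc n) + 1 = Suc R" "Suc (Suc n) - 1 = Suc n"
    "2*K - Suc n = M" "K - Suc n + 1 = Suc R" "Suc n - 1 = n"
    "2*k - Suc (Suc (Suc n)) = M" "k - Suc (Suc (Suc n)) + 1 = R" "Suc (Suc (Suc n)) - 1 = Suc (Suc n)"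
    using assms unfolding M_def R_def k by simp_all
  show ?thesis
    unfolding ballot_window_sum_def ballot_def K idx unfolding k binomial_prefix_sum_Suc_Suc
    by (simp add: binomial_prefix_sum_Suc algebra_simps)
qed

lemma weighted_alt_catalan_sum_eq_window:
  "1 \<le> n \<Longrightarrow> n \<le> k \<Longrightarrow> weighted_alt_catalan_sum k n = ballot_window_sum k n"
proof -
  have "Suc n \<le> k \<Longrightarrow> weighted_alt_catalan_sum k (Suc n) = ballot_window_sum k (Suc n)" for n
  proof (induction n arbitrary: k rule: induct_nat_012)
    case 0
    then show ?case by (simp add: weighted_alt_catalan_sum_def ballot_window_sum_def)
  next
    case 1
    then obtain K where k: "k = Suc (Suc K)" by (intro that[of "k - 2"]) auto
    have "weighted_alt_catalan_sum k 2 = int (catalan (Suc K))"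
      by (simp add: weighted_alt_catalan_sum_def numeral_2_eq_2 diagonal_binomial_sum_Suc_Suc
          signed_catalan_def k)
    also have "\<dots> = ballot_window_sum k 2"
      by (simp add: catalan_eq_ballot ballot_def ballot_window_sum_def binomial_prefix_sum_Suc k)
    finally show ?case by (simp add: numeral_2_eq_2)
  next
    case (ge2 n)
    have "alt_catalan_sum (k - 1) (Suc n) = ballot (2*(k - 1) - Suc n) (k - 1)"
      using ge2.prems by (simp add: alt_catalan_sum_eq_ballot)
    with ge2 show ?case
      by (simp add: weighted_alt_catalan_sum_Suc_Suc ballot_window_sum_Suc_Suc)
  qed
  then show "1 \<le> n \<Longrightarrow> n \<le> k \<Longrightarrow> ?thesis" by (cases n) auto
qed

section \<open>Sets with bounded cut lengths\<close>

text \<open>\<open>cut_length m S t\<close> is the length of the increasing subsequence of the Grassmannian permutation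
  with first part \<open>S\<close> that takes the elements of \<open>S\<close> below \<open>t\<close> and then the remaining values from
  \<open>t\<close> on; the longest increasing subsequence is the longest of these.\<close>

definition cut_length :: "nat \<Rightarrow> nat set \<Rightarrow> nat \<Rightarrow> nat" where
  "cut_length m S t = card {x \<in> S. x < t} + card {y \<in> {1..m} - S. t \<le> y}"

definition lis_bounded :: "nat \<Rightarrow> nat \<Rightarrow> nat set \<Rightarrow> bool" where
  "lis_bounded m K S \<longleftrightarrow> (\<forall>t. cut_length m S t \<le> K)"

lemma cut_length_beyond: "S \<subseteq> {1..m} \<Longrightarrow> m < t \<Longrightarrow> cut_length m S t = card S"
proof -
  assume "S \<subseteq> {1..m}" "m < t"
  then have "{x \<in> S. x < t} = S" "{y \<in> {1..m} - S. t \<le> y} = {}" by auto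
  then show ?thesis by (simp add: cut_length_def)
qed

lemma cut_length_Suc:
  assumes "S \<subseteq> {1..m}"
  shows "cut_length (Suc m) S t = cut_length m S t + (if t \<le> Suc m then 1 else 0)"
proof -
  have "{y \<in> {1..Suc m} - S. t \<le> y} = {y \<in> {1..m} - S. t \<le> y} \<union> (if t \<le> Suc m then {Suc m} else {})"
    using assms by (auto simp: le_Suc_eq)
  moreover have "Suc m \<notin> {y \<in> {1..m} - S. t \<le> y}" by simp
  ultimately show ?thesis by (simp add: cut_length_def)
qed

lemma cut_length_Suc_insert:
  assumes "S \<subseteq> {1..m}"
  shows "cut_length (Suc m) (insert (Suc m) S) t = cut_length m S t + (if Suc m < t then 1 else 0)"
proof -
  have "{x \<in> insert (Suc m) S. x < t} = {x \<in> S. x < t} \<union> (if Suc m < t then {Suc m} else {})"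
    by auto
  moreover have "card (insert (Suc m) {x \<in> S. x < t}) = Suc (card {x \<in> S. x < t})"
    using assms by (intro card_insert_disjoint) (auto intro: finite_subset)
  moreover have "{y \<in> {1..Suc m} - insert (Suc m) S. t \<le> y} = {y \<in> {1..m} - S. t \<le> y}"
    by (auto simp: le_Suc_eq)
  ultimately show ?thesis by (simp add: cut_length_def)
qed

lemma lis_bounded_Suc:
  assumes S: "S \<subseteq> {1..m}"
  shows "lis_bounded (Suc m) K S \<longleftrightarrow> 1 \<le> K \<and> lis_bounded m (K - 1) S"
proof
  assume bounded: "lis_bounded (Suc m) K S"
  then have K: "1 \<le> K"
    using cut_length_Suc[OF S, of 0] by (auto simp: lis_bounded_def dest: spec[of _ 0])
  have "cut_length m S t \<le> K - 1" for t
  proof (cases "t \<le> Suc m")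
    case True
    then show ?thesis using bounded cut_length_Suc[OF S, of t] by (auto simp: lis_bounded_def dest: spec[of _ t])
  next
    case False
    then have "cut_length m S t = cut_length m S (Suc m)"
      using cut_length_beyond[OF S] by simp
    then show ?thesis using bounded cut_length_Suc[OF S, of "Suc m"]
      by (auto simp: lis_bounded_def dest: spec[of _ "Suc m"])
  qed
  with K show "1 \<le> K \<and> lis_bounded m (K - 1) S" by (simp add: lis_bounded_def)
next
  assume "1 \<le> K \<and> lis_bounded m (K - 1) S"
  then have "cut_length m S t + 1 \<le> K" for t
    unfolding lis_bounded_def by (metis le_diff_conv2)
  then show "lis_bounded (Suc m) K S"
    unfolding lis_bounded_def cut_length_Suc[OF S] by (simp add: Suc_leD)
qed

lemma lis_bounded_Suc_insert:
  assumes S: "S \<subseteq> {1..m}"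
  shows "lis_bounded (Suc m) K (insert (Suc m) S) \<longleftrightarrow> lis_bounded m K S \<and> card S < K"
  unfolding lis_bounded_def cut_length_Suc_insert[OF S]
proof safe
  assume bounded: "\<forall>t. cut_length m S t + (if Suc m < t then 1 else 0) \<le> K"
  then show "cut_length m S t \<le> K" for t
    by (metis add_leD1)
  show "card S < K"
    using bounded[rule_format, of "Suc (Suc m)"] cut_length_beyond[OF S, of "Suc (Suc m)"] by simp
next
  fix t
  assume "\<forall>t. cut_length m S t \<le> K" "card S < K"
  then show "cut_length m S t + (if Suc m < t then 1 else 0) \<le> K"
    using cut_length_beyond[OF S, of t] by auto
qed

definition lis_bounded_sets :: "nat \<Rightarrow> nat \<Rightarrow> nat \<Rightarrow> nat set set" where
  "lis_bounded_sets m K a = {S. S \<subseteq> {1..m} \<and> lis_bounded m K S \<and> card S = a}"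

lemma lis_bounded_sets_Suc:
  "lis_bounded_sets (Suc m) K a
     = (if 1 \<le> K then lis_bounded_sets m (K - 1) a else {})
       \<union> insert (Suc m) ` (if 1 \<le> a \<and> a \<le> K then lis_bounded_sets m K (a - 1) else {})"
proof (intro equalityI subsetI)
  fix S assume S: "S \<in> lis_bounded_sets (Suc m) K a"
  show "S \<in> (if 1 \<le> K then lis_bounded_sets m (K - 1) a else {})
       \<union> insert (Suc m) ` (if 1 \<le> a \<and> a \<le> K then lis_bounded_sets m K (a - 1) else {})"
  proof (cases "Suc m \<in> S")
    case False
    with S have "S \<subseteq> {1..m}" by (auto simp: lis_bounded_sets_def le_Suc_eq)
    with S show ?thesis by (auto simp: lis_bounded_sets_def lis_bounded_Suc)
  next
    case True
    define T where "T = S - {Suc m}"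
    have T: "T \<subseteq> {1..m}" "S = insert (Suc m) T" "Suc m \<notin> T"
      using S True by (auto simp: T_def lis_bounded_sets_def le_Suc_eq)
    then have "card S = Suc (card T)" by (simp add: finite_subset)
    with S T have "T \<in> (if 1 \<le> a \<and> a \<le> K then lis_bounded_sets m K (a - 1) else {})"
      by (auto simp: lis_bounded_sets_def lis_bounded_Suc_insert)
    with T(2) show ?thesis by blast
  qed
next
  fix S assume "S \<in> (if 1 \<le> K then lis_bounded_sets m (K - 1) a else {})
       \<union> insert (Suc m) ` (if 1 \<le> a \<and> a \<le> K then lis_bounded_sets m K (a - 1) else {})"
  then show "S \<in> lis_bounded_sets (Suc m) K a"
  proof
    assume "S \<in> (if 1 \<le> K then lis_bounded_sets m (K - 1) a else {})"
    then show ?thesis by (auto simp: lis_bounded_sets_def lis_bounded_Suc split: if_splits)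
  next
    assume "S \<in> insert (Suc m) ` (if 1 \<le> a \<and> a \<le> K then lis_bounded_sets m K (a - 1) else {})"
    then obtain T where T: "S = insert (Suc m) T" "T \<subseteq> {1..m}" "lis_bounded m K T" "card T = a - 1"
      "1 \<le> a" "a \<le> K"
      by (auto simp: lis_bounded_sets_def split: if_splits)
    then have "finite T" "Suc m \<notin> T" by (auto intro: finite_subset)
    with T have "card S = a" by simp
    with T show ?thesis by (auto simp: lis_bounded_sets_def lis_bounded_Suc_insert)
  qed
qed

lemma finite_lis_bounded_sets: "finite (lis_bounded_sets m K a)"
  by (rule finite_subset[of _ "Pow {1..m}"]) (auto simp: lis_bounded_sets_def)

lemma card_lis_bounded_sets_Suc:
  "card (lis_bounded_sets (Suc m) K a)
     = (if 1 \<le> K then card (lis_bounded_sets m (K - 1) a) else 0)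
       + (if 1 \<le> a \<and> a \<le> K then card (lis_bounded_sets m K (a - 1)) else 0)"
proof -
  let ?A = "if 1 \<le> K then lis_bounded_sets m (K - 1) a else {}"
  let ?B = "if 1 \<le> a \<and> a \<le> K then lis_bounded_sets m K (a - 1) else {}"
  have fresh: "Suc m \<notin> S" if "S \<in> lis_bounded_sets m K' a'" for S K' a'
    using that by (auto simp: lis_bounded_sets_def)
  have "inj_on (insert (Suc m)) ?B"
    by (rule inj_onI) (metis empty_iff fresh insert_ident)
  moreover have "?A \<inter> insert (Suc m) ` ?B = {}"
    using fresh by auto
  ultimately have "card (lis_bounded_sets (Suc m) K a) = card ?A + card ?B"
    unfolding lis_bounded_sets_Suc by (simp add: card_Un_disjoint card_image finite_lis_bounded_sets)
  then show ?thesis by (simp split: if_split)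
qed

lemma card_lis_bounded_sets:
  "int (card (lis_bounded_sets m K a))
     = (if a \<le> K \<and> m \<le> K + a then int (m choose a) - int (m choose Suc K) else 0)"
proof (induction m arbitrary: K a)
  case 0
  have "lis_bounded_sets 0 K a = (if a = 0 then {{}} else {})"
    by (auto simp: lis_bounded_sets_def lis_bounded_def cut_length_def)
  then show ?case by simp
next
  case (Suc m)
  show ?case
    unfolding card_lis_bounded_sets_Suc of_nat_add if_distrib[of int] Suc.IH
    by (cases K; cases a; cases "a = K") auto
qed

lemma card_lis_bounded:
  "card {S. S \<subseteq> {1..m} \<and> lis_bounded m K S} = (\<Sum>a\<le>m. card (lis_bounded_sets m K a))"
proof -
  have "{S. S \<subseteq> {1..m} \<and> lis_bounded m K S} = (\<Union>a\<le>m. lis_bounded_sets m K a)"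
    by (auto simp: lis_bounded_sets_def card_mono[of "{1..m}", simplified])
  then show ?thesis
    by (simp only:) (rule card_UN_disjoint, auto simp: finite_lis_bounded_sets lis_bounded_sets_def)
qed

lemma card_lis_bounded_eq_window:
  assumes "2 \<le> n" "n \<le> k"
  shows "int (card {S. S \<subseteq> {1..2*k - n} \<and> lis_bounded (2*k - n) (k - 1) S}) = ballot_window_sum k n"
proof -
  define m where "m = 2*k - n"
  define lo where "lo = k - n + 1"
  let ?f = "\<lambda>a. int (m choose a) - int (m choose k)"
  have k: "Suc (k - 1) = k" using assms by simp
  have window: "{a \<in> {..m}. a \<le> k - 1 \<and> m \<le> k - 1 + a} = {lo..<k}"
    using assms by (auto simp: m_def lo_def)
  have "int (card {S. S \<subseteq> {1..m} \<and> lis_bounded m (k - 1) S})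
      = (\<Sum>a\<le>m. if a \<le> k - 1 \<and> m \<le> k - 1 + a then ?f a else 0)"
    unfolding card_lis_bounded of_nat_sum card_lis_bounded_sets k ..
  also have "\<dots> = (\<Sum>a\<in>{lo..<k}. ?f a)"
    unfolding window[symmetric] by (simp only: sum.inter_filter finite_atMost)
  also have "\<dots> = (\<Sum>a<k. ?f a) - (\<Sum>a<lo. ?f a)"
    using sum_diff_nat_ivl[of 0 lo k ?f] assms by (simp add: lo_def atLeast0LessThan)
  also have "\<dots> = ballot_window_sum k n"
    using assms
    by (simp add: ballot_window_sum_def binomial_prefix_sum_def sum_subtractf m_def lo_def algebra_simps of_nat_diff)
  finally show ?thesis unfolding m_def .
qed

section \<open>Grassmannian permutations\<close>

lemma sorted_wrt_less_iff_nth_less_iff: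
  fixes xs :: "'a::linorder list"
  shows "sorted_wrt (<) xs \<longleftrightarrow> (\<forall>i<length xs. \<forall>j<length xs. xs ! i < xs ! j \<longleftrightarrow> i < j)"
proof
  assume sorted: "sorted_wrt (<) xs"
  show "\<forall>i<length xs. \<forall>j<length xs. xs ! i < xs ! j \<longleftrightarrow> i < j"
  proof (intro allI impI)
    fix i j assume "i < length xs" "j < length xs"
    then show "xs ! i < xs ! j \<longleftrightarrow> i < j"
      using sorted_wrt_nth_less[OF sorted, of i j] sorted_wrt_nth_less[OF sorted, of j i]
      by (cases i j rule: linorder_cases) auto
  qed
qed (auto simp: sorted_wrt_iff_nth_less)

lemma order_iso_id_perm_iff: "order_iso \<tau> (id_perm k) \<longleftrightarrow> length \<tau> = k \<and> sorted_wrt (<) \<tau>"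
proof -
  have "length (id_perm k) = k" by (simp add: id_perm_def)
  moreover have "id_perm k ! i = Suc i" if "i < k" for i
    using that by (simp add: id_perm_def del: upt_Suc)
  ultimately show ?thesis
    by (auto simp: order_iso_def sorted_wrt_less_iff_nth_less_iff)
qed

lemma contains_id_perm_iff:
  "contains_pattern \<sigma> (id_perm k) \<longleftrightarrow> (\<exists>\<tau>. subseq \<tau> \<sigma> \<and> length \<tau> = k \<and> sorted_wrt (<) \<tau>)"
  by (simp add: contains_pattern_def order_iso_id_perm_iff)

lemma set_subseq: "subseq xs ys \<Longrightarrow> set xs \<subseteq> set ys"
  by (induction rule: list_emb.induct) auto

lemma increasing_subseq_append_length_le:
  fixes \<tau> xs ys :: "nat list"
  assumes "subseq \<tau> (xs @ ys)" "sorted_wrt (<) \<tau>"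
  shows "\<exists>t. length \<tau> \<le> card {x \<in> set xs. x < t} + card {y \<in> set ys. t \<le> y}"
proof -
  obtain \<tau>1 \<tau>2 where split: "\<tau> = \<tau>1 @ \<tau>2" "subseq \<tau>1 xs" "subseq \<tau>2 ys"
    using assms(1) by (rule subseq_appendE)
  have sorted: "sorted_wrt (<) \<tau>1" "sorted_wrt (<) \<tau>2" "\<forall>x\<in>set \<tau>1. \<forall>y\<in>set \<tau>2. x < y"
    using assms(2) unfolding split(1) sorted_wrt_append by auto
  then have length: "length \<tau>1 = card (set \<tau>1)" "length \<tau>2 = card (set \<tau>2)"
    by (simp_all add: distinct_card strict_sorted_iff)
  define t where "t = (if \<tau>1 = [] then 0 else Suc (Max (set \<tau>1)))"
  have "set \<tau>1 \<subseteq> {x \<in> set xs. x < t}"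
    using set_subseq[OF split(2)] by (auto simp: t_def le_imp_less_Suc)
  then have "length \<tau>1 \<le> card {x \<in> set xs. x < t}"
    unfolding length by (rule card_mono[rotated]) simp
  moreover have "set \<tau>2 \<subseteq> {y \<in> set ys. t \<le> y}"
    using set_subseq[OF split(3)] sorted(3) by (auto simp: t_def Suc_le_eq)
  then have "length \<tau>2 \<le> card {y \<in> set ys. t \<le> y}"
    unfolding length by (rule card_mono[rotated]) simp
  ultimately show ?thesis
    using split(1) by (intro exI[of _ t]) simp
qed

lemma increasing_subseq_append_exists:
  fixes xs ys :: "nat list"
  assumes "sorted_wrt (<) xs" "sorted_wrt (<) ys"
  shows "\<exists>\<tau>. subseq \<tau> (xs @ ys) \<and> sorted_wrt (<) \<tau>
           \<and> length \<tau> = card {x \<in> set xs. x < t} + card {y \<in> set ys. t \<le> y}"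
proof (intro exI conjI)
  let ?\<tau> = "filter (\<lambda>x. x < t) xs @ filter (\<lambda>y. t \<le> y) ys"
  show "subseq ?\<tau> (xs @ ys)"
    by (rule list_emb_append_mono) simp_all
  show "sorted_wrt (<) ?\<tau>"
    using assms by (auto simp: sorted_wrt_append intro: sorted_wrt_filter)
  have "distinct xs" "distinct ys"
    using assms strict_sorted_iff by auto
  then show "length ?\<tau> = card {x \<in> set xs. x < t} + card {y \<in> set ys. t \<le> y}"
    by (simp add: distinct_card[symmetric] del: distinct_card)
qed

lemma descents_take: "descents (take n xs) = {i \<in> descents xs. Suc i < n}"
  by (auto simp: descents_def)

lemma descents_drop: "descents (drop n xs) = {i. n + i \<in> descents xs}"
  by (auto simp: descents_def)

lemma descents_empty_iff_sorted:
  assumes "distinct xs"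
  shows "descents xs = {} \<longleftrightarrow> sorted_wrt (<) xs"
proof -
  have "xs ! i \<noteq> xs ! Suc i" if "Suc i < length xs" for i
    using assms that by (simp add: nth_eq_iff_index_eq)
  then have "descents xs = {} \<longleftrightarrow> (\<forall>i. Suc i < length xs \<longrightarrow> xs ! i < xs ! Suc i)"
    by (auto simp: descents_def linorder_neq_iff)
  also have "\<dots> \<longleftrightarrow> sorted_wrt (<) xs"
    by (simp add: sorted_wrt_iff_nth_Suc_transp)
  finally show ?thesis .
qed

lemma descents_append_subset:
  assumes "sorted_wrt (<) xs" "sorted_wrt (<) ys"
  shows "descents (xs @ ys) \<subseteq> {length xs - 1}"
proof
  fix i assume i: "i \<in> descents (xs @ ys)"
  have no_descents: "descents xs = {}" "descents ys = {}"
    using assms descents_empty_iff_sorted strict_sorted_iff by blast+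
  consider "Suc i < length xs" | "length xs \<le> i" | "i = length xs - 1"
    by linarith
  then show "i \<in> {length xs - 1}"
  proof cases
    case 1
    with i have "i \<in> descents (take (length xs) (xs @ ys))"
      by (simp only: descents_take) simp
    with no_descents show ?thesis by simp
  next
    case 2
    with i have "i - length xs \<in> descents (drop (length xs) (xs @ ys))"
      by (simp only: descents_drop) simp
    with no_descents show ?thesis by simp
  qed simp
qed

lemma last_index_in_descents_append:
  "xs \<noteq> [] \<Longrightarrow> ys \<noteq> [] \<Longrightarrow> length xs - 1 \<in> descents (xs @ ys) \<longleftrightarrow> hd ys < last xs"
  by (simp add: descents_def nth_append last_conv_nth hd_conv_nth)

lemma sorted_le_last: "sorted xs \<Longrightarrow> x \<in> set xs \<Longrightarrow> x \<le> last xs"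
  by (induction xs) (auto simp: last_in_set)

lemma sorted_hd_le: "sorted xs \<Longrightarrow> x \<in> set xs \<Longrightarrow> hd xs \<le> x"
  by (cases xs) auto

definition grassmannian_perm :: "nat \<Rightarrow> nat set \<Rightarrow> nat list" where
  "grassmannian_perm m S = sorted_list_of_set S @ sorted_list_of_set ({1..m} - S)"

lemma grassmannian_perm_in_permutations:
  assumes "S \<subseteq> {1..m}"
  shows "grassmannian_perm m S \<in> permutations_of_set {1..m}"
proof -
  have "finite S" using assms finite_subset by blast
  then show ?thesis
    unfolding grassmannian_perm_def by (intro permutations_of_setI) (use assms in auto)
qed

lemma grassmannian_grassmannian_perm: "grassmannian (grassmannian_perm m S)"
proof -
  have "descents (grassmannian_perm m S) \<subseteq> {card S - 1}"
    using descents_append_subset[of "sorted_list_of_set S" "sorted_list_of_set ({1..m} - S)"]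
    by (simp add: grassmannian_perm_def)
  then have "card (descents (grassmannian_perm m S)) \<le> card {card S - 1}"
    by (rule card_mono[rotated]) simp
  then show ?thesis
    unfolding grassmannian_def by simp
qed

lemma descents_grassmannian_perm:
  assumes S: "S \<subseteq> {1..m}" and inversion: "a \<in> S" "b \<in> {1..m} - S" "b < a"
  shows "descents (grassmannian_perm m S) = {card S - 1}"
proof -
  define xs where "xs = sorted_list_of_set S"
  define ys where "ys = sorted_list_of_set ({1..m} - S)"
  have "finite S" using S finite_subset by blast
  then have xs: "sorted xs" "set xs = S" "length xs = card S" and ys: "sorted ys" "set ys = {1..m} - S"
    by (simp_all add: xs_def ys_def)
  have "a \<in> set xs" "b \<in> set ys"
    using inversion xs(2) ys(2) by simp_all
  then have "xs \<noteq> []" "ys \<noteq> []" "a \<le> last xs" "hd ys \<le> b"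
    using sorted_le_last[OF xs(1)] sorted_hd_le[OF ys(1)] by auto
  moreover have "hd ys < last xs"
    using calculation inversion(3) by linarith
  ultimately have "length xs - 1 \<in> descents (xs @ ys)"
    using last_index_in_descents_append by blast
  moreover have "descents (xs @ ys) \<subseteq> {length xs - 1}"
    by (rule descents_append_subset) (simp_all add: xs_def ys_def)
  ultimately show ?thesis
    unfolding grassmannian_perm_def xs_def[symmetric] ys_def[symmetric] xs(3) by blast
qed

lemma contains_id_perm_grassmannian_perm_iff:
  assumes S: "S \<subseteq> {1..m}"
  shows "contains_pattern (grassmannian_perm m S) (id_perm k) \<longleftrightarrow> (\<exists>t. k \<le> cut_length m S t)"
proof -
  let ?xs = "sorted_list_of_set S" and ?ys = "sorted_list_of_set ({1..m} - S)"
  have "finite S" using S finite_subset by blast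
  then have sets: "set ?xs = S" "set ?ys = {1..m} - S"
    by simp_all
  show ?thesis
  proof
    assume "contains_pattern (grassmannian_perm m S) (id_perm k)"
    then obtain \<tau> where "subseq \<tau> (?xs @ ?ys)" "length \<tau> = k" "sorted_wrt (<) \<tau>"
      by (auto simp: contains_id_perm_iff grassmannian_perm_def)
    then show "\<exists>t. k \<le> cut_length m S t"
      using increasing_subseq_append_length_le sets by (fastforce simp: cut_length_def)
  next
    assume "\<exists>t. k \<le> cut_length m S t"
    then obtain t where t: "k \<le> cut_length m S t" ..
    obtain \<tau> where \<tau>: "subseq \<tau> (?xs @ ?ys)" "sorted_wrt (<) \<tau>" "length \<tau> = cut_length m S t"
      using increasing_subseq_append_exists[of ?xs ?ys t] sets by (auto simp: cut_length_def)
    have "subseq (take k \<tau>) (grassmannian_perm m S)"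
      unfolding grassmannian_perm_def
      by (rule subseq_order.order_trans[OF prefix_imp_subseq[OF take_is_prefix] \<tau>(1)])
    moreover have "length (take k \<tau>) = k" "sorted_wrt (<) (take k \<tau>)"
      using t \<tau> by simp_all
    ultimately show "contains_pattern (grassmannian_perm m S) (id_perm k)"
      unfolding contains_id_perm_iff by blast
  qed
qed

lemma avoids_id_perm_grassmannian_perm_iff:
  "S \<subseteq> {1..m} \<Longrightarrow> avoids (grassmannian_perm m S) (id_perm (Suc K)) \<longleftrightarrow> lis_bounded m K S"
  by (simp add: avoids_def contains_id_perm_grassmannian_perm_iff lis_bounded_def not_less_eq_eq)

lemma sorted_list_of_set_set_strict_sorted:
  "sorted_wrt (<) xs \<Longrightarrow> sorted_list_of_set (set xs) = xs"
  by (simp add: sorted_list_of_set_sort_remdups strict_sorted_iff distinct_remdups_id sorted_sort_id)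

lemma grassmannian_descents_subset_singleton:
  assumes "grassmannian xs"
  obtains d where "descents xs \<subseteq> {d}"
proof -
  have "finite (descents xs)"
    by (rule finite_subset[of _ "{..<length xs}"]) (auto simp: descents_def)
  with assms have "\<forall>i\<in>descents xs. \<forall>j\<in>descents xs. i = j"
    by (simp add: grassmannian_def card_le_Suc0_iff_eq[symmetric])
  then show ?thesis
    using that by (metis empty_subsetI insertI1 subsetI)
qed

lemma grassmannian_permutationE:
  assumes \<sigma>: "\<sigma> \<in> permutations_of_set {1..m}" and "grassmannian \<sigma>"
  obtains S where "S \<subseteq> {1..m}" "\<sigma> = grassmannian_perm m S"
proof -
  obtain d where d: "descents \<sigma> \<subseteq> {d}"
    using grassmannian_descents_subset_singleton[OF \<open>grassmannian \<sigma>\<close>] .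
  define xs where "xs = take (Suc d) \<sigma>"
  define ys where "ys = drop (Suc d) \<sigma>"
  have \<sigma>_split: "\<sigma> = xs @ ys" and distinct: "distinct (xs @ ys)" and set: "set (xs @ ys) = {1..m}"
    using permutations_of_setD[OF \<sigma>] by (simp_all add: xs_def ys_def)
  have "descents xs = {}" "descents ys = {}"
    using d by (auto simp: xs_def ys_def descents_take descents_drop)
  then have sorted: "sorted_wrt (<) xs" "sorted_wrt (<) ys"
    using distinct descents_empty_iff_sorted by auto
  have "{1..m} - set xs = set ys"
    using distinct set by auto
  with sorted have "\<sigma> = grassmannian_perm m (set xs)"
    unfolding grassmannian_perm_def \<sigma>_split by (simp only: sorted_list_of_set_set_strict_sorted)
  moreover have "set xs \<subseteq> {1..m}"
    using set by auto
  ultimately show ?thesis using that by blast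
qed

lemma inj_on_grassmannian_perm:
  "inj_on (grassmannian_perm m) {S. S \<subseteq> {1..m} \<and> (\<exists>a\<in>S. \<exists>b\<in>{1..m} - S. b < a)}"
proof (rule inj_onI)
  have descents: "descents (grassmannian_perm m S) = {card S - 1}" "card S \<noteq> 0" "finite S"
    if "S \<in> {S. S \<subseteq> {1..m} \<and> (\<exists>a\<in>S. \<exists>b\<in>{1..m} - S. b < a)}" for S
  proof -
    from that obtain a b where inversion: "S \<subseteq> {1..m}" "a \<in> S" "b \<in> {1..m} - S" "b < a"
      by blast
    then show "descents (grassmannian_perm m S) = {card S - 1}"
      by (rule descents_grassmannian_perm)
    show "finite S"
      using inversion(1) finite_subset by blast
    with inversion(2) show "card S \<noteq> 0"
      by auto
  qed
  fix S T
  assume S: "S \<in> {S. S \<subseteq> {1..m} \<and> (\<exists>a\<in>S. \<exists>b\<in>{1..m} - S. b < a)}"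
    and T: "T \<in> {S. S \<subseteq> {1..m} \<and> (\<exists>a\<in>S. \<exists>b\<in>{1..m} - S. b < a)}"
    and eq: "grassmannian_perm m S = grassmannian_perm m T"
  have "card S - 1 = card T - 1"
    using descents(1)[OF S] descents(1)[OF T] eq by simp
  with descents(2)[OF S] descents(2)[OF T] have "card S = card T"
    by linarith
  moreover have "take (card S) (grassmannian_perm m S) = sorted_list_of_set S"
    "take (card T) (grassmannian_perm m T) = sorted_list_of_set T"
    by (simp_all add: grassmannian_perm_def)
  ultimately have "sorted_list_of_set S = sorted_list_of_set T"
    using eq by simp
  then show "S = T"
    using descents(3)[OF S] descents(3)[OF T] by (metis set_sorted_list_of_set)
qed

lemma lis_bounded_has_inversion:
  assumes S: "S \<subseteq> {1..m}" and bounded: "lis_bounded m K S" and "K < m"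
  shows "\<exists>a\<in>S. \<exists>b\<in>{1..m} - S. b < a"
proof (rule ccontr)
  assume "\<not> ?thesis"
  then have below: "a < b" if "a \<in> S" "b \<in> {1..m} - S" for a b
    using that by (metis DiffD2 linorder_neqE_nat)
  have "finite S" using S finite_subset by blast
  define t where "t = (if S = {} then 0 else Suc (Max S))"
  have "{x \<in> S. x < t} = S"
    using \<open>finite S\<close> by (auto simp: t_def le_imp_less_Suc)
  moreover have "{y \<in> {1..m} - S. t \<le> y} = {1..m} - S"
    using below \<open>finite S\<close> by (auto simp: t_def Suc_le_eq)
  ultimately have "cut_length m S t = m"
    using S \<open>finite S\<close> card_mono[OF _ S] by (simp add: cut_length_def card_Diff_subset)
  with bounded \<open>K < m\<close> show False
    by (metis lis_bounded_def not_le)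
qed

lemma card_grassmannian_avoiding_id_perm:
  assumes "K < m"
  shows "card {\<sigma> \<in> permutations_of_set {1..m}. grassmannian \<sigma> \<and> avoids \<sigma> (id_perm (Suc K))}
    = card {S. S \<subseteq> {1..m} \<and> lis_bounded m K S}"
proof -
  let ?F = "{S. S \<subseteq> {1..m} \<and> lis_bounded m K S}"
  have "grassmannian_perm m ` ?F
      = {\<sigma> \<in> permutations_of_set {1..m}. grassmannian \<sigma> \<and> avoids \<sigma> (id_perm (Suc K))}"
  proof (intro equalityI subsetI)
    fix \<sigma> assume "\<sigma> \<in> grassmannian_perm m ` ?F"
    then obtain S where "S \<subseteq> {1..m}" "lis_bounded m K S" "\<sigma> = grassmannian_perm m S"
      by blast
    then show "\<sigma> \<in> {\<sigma> \<in> permutations_of_set {1..m}. grassmannian \<sigma> \<and> avoids \<sigma> (id_perm (Suc K))}"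
      using grassmannian_perm_in_permutations grassmannian_grassmannian_perm
        avoids_id_perm_grassmannian_perm_iff by blast
  next
    fix \<sigma> assume "\<sigma> \<in> {\<sigma> \<in> permutations_of_set {1..m}. grassmannian \<sigma> \<and> avoids \<sigma> (id_perm (Suc K))}"
    then have "\<sigma> \<in> permutations_of_set {1..m}" "grassmannian \<sigma>" "avoids \<sigma> (id_perm (Suc K))"
      by simp_all
    then obtain S where "S \<subseteq> {1..m}" "\<sigma> = grassmannian_perm m S"
      by (elim grassmannian_permutationE)
    with \<open>avoids \<sigma> (id_perm (Suc K))\<close> show "\<sigma> \<in> grassmannian_perm m ` ?F"
      using avoids_id_perm_grassmannian_perm_iff by blast
  qed
  moreover have "inj_on (grassmannian_perm m) ?F"
    using inj_on_grassmannian_perm by (rule inj_on_subset) (use lis_bounded_has_inversion \<open>K < m\<close> in blast)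
  ultimately show ?thesis
    using card_image by fastforce
qed

lemma weighted_alt_catalan_sum_eq:
  "weighted_alt_catalan_sum k n
     = (\<Sum>j = 1..n. (-1)^(j-1) * int j * int ((n - j) choose j) * int (catalan (k - j)))"
proof -
  have "{..n} = insert 0 {1..n}" by auto
  then have "weighted_alt_catalan_sum k n = (\<Sum>j = 1..n. - int j * signed_catalan k j * int ((n - j) choose j))"
    by (simp add: weighted_alt_catalan_sum_def diagonal_binomial_sum_def)
  also have "\<dots> = (\<Sum>j = 1..n. (-1)^(j-1) * int j * int ((n - j) choose j) * int (catalan (k - j)))"
  proof (rule sum.cong)
    fix j assume "j \<in> {1..n}"
    then obtain i where "j = Suc i" by (cases j) auto
    then show "- int j * signed_catalan k j * int ((n - j) choose j)
        = (-1)^(j-1) * int j * int ((n - j) choose j) * int (catalan (k - j))"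
      by (simp add: signed_catalan_def algebra_simps)
  qed simp
  finally show ?thesis .
qed

theorem theorem3p1:
  fixes k m :: nat
  assumes "k \<ge> 2" and "k \<le> m" and "m \<le> 2*k - 2"
  shows "int (card {\<sigma> \<in> permutations_of_set {1..m}. grassmannian \<sigma> \<and> avoids \<sigma> (id_perm k)})
    = (\<Sum>j = 1..2*k - m. (-1)^(j-1) * int j * int ((2*k - m - j) choose j) * int (catalan (k - j)))"
proof -
  define n where "n = 2*k - m"
  have n: "2 \<le> n" "n \<le> k" "m = 2*k - n"
    using assms by (auto simp: n_def)
  have "card {\<sigma> \<in> permutations_of_set {1..m}. grassmannian \<sigma> \<and> avoids \<sigma> (id_perm k)}
      = card {S. S \<subseteq> {1..m} \<and> lis_bounded m (k - 1) S}"
    using card_grassmannian_avoiding_id_perm[of "k - 1" m] assms by simp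
  then have "int (card {\<sigma> \<in> permutations_of_set {1..m}. grassmannian \<sigma> \<and> avoids \<sigma> (id_perm k)})
      = ballot_window_sum k n"
    using card_lis_bounded_eq_window[OF n(1,2)] n(3) by simp
  also have "\<dots> = weighted_alt_catalan_sum k n"
    using n by (simp add: weighted_alt_catalan_sum_eq_window)
  finally show ?thesis
    unfolding weighted_alt_catalan_sum_eq n_def .
qed

end
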